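(* Let $G$ be a graph, $k,d$ integers, $X$ a minimum vertex cover of $G$ that is also an independent set of $G$, $Y=V(G)\setminus X$, and $X_L,X_R$ disjoint subsets of $X$. Then $((G,k,d),X,\langle X_L,X_R\rangle)$ is a Yes-instance of \textsc{Annotated Contraction(vc)} if and only if it is a Yes-instance of \textsc{Constrained MaxCut}.
   Context: All graphs are finite, simple and undirected. $\mathrm{rank}(H)$ is $|V(H)|$ minus the number of connected components of $H$; for $S\subseteq V(G)$, $\mathrm{rank}(S):=\mathrm{rank}(G[S])$; for an edge set $F$, $\mathrm{rank}(F):=\mathrm{rank}(G[V(F)])$ where $V(F)$ is the set of endpoints of $F$. For $S_1,S_2\subseteq V(G)$, $E(S_1,S_2)$ is the set of edges with one endpoint in $S_1$ and the other in $S_2$. The instance is a Yes-instance of \textsc{Annotated Contraction(vc)} iff there exist $X_s\subseteq X$ and $Y_s\subseteq Y$ with (i) $(X\setminus X_s)\cup Y_s$ is a vertex cover of $G$, (ii) $\mathrm{rank}((X\setminus X_s)\cup Y_s)\ge k$, (iii) $|Y_s|-|X_s|\le k-d$, (iv) $X_L\cap X_s=\emptyset$ and $X_R\subseteq X_s$. It is a Yes-instance of \textsc{Constrained MaxCut} iff there exists a partition $\langle V_L,V_R\rangle$ of $V(G)$ with (i) $E(V_L\cap Y,V_R\cap X)=\emptyset$, (ii) $\mathrm{rank}(E(V_L\cap X,V_R\cap Y))\ge k$, (iii) $|V_R\cap Y|-|V_R\cap X|\le k-d$, (iv) $X_L\subseteq V_L$ and $X_R\subseteq V_R$. *)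

theory Defs
  imports Main
begin

definition graph :: "'a set \<Rightarrow> 'a set set \<Rightarrow> bool" where
  "graph V E \<longleftrightarrow> finite V \<and> (\<forall>e\<in>E. e \<subseteq> V \<and> card e = 2)"

definition adj_in :: "'a set set \<Rightarrow> 'a set \<Rightarrow> ('a \<times> 'a) set" where
  "adj_in E S = {(u, v). u \<in> S \<and> v \<in> S \<and> {u, v} \<in> E}"

definition conn_in :: "'a set set \<Rightarrow> 'a set \<Rightarrow> ('a \<times> 'a) set" where
  "conn_in E S = {(u, v). u \<in> S \<and> v \<in> S \<and> (u, v) \<in> (adj_in E S)\<^sup>*}"

definition num_components :: "'a set set \<Rightarrow> 'a set \<Rightarrow> nat" where
  "num_components E S = card (S // conn_in E S)"

definition rank_set :: "'a set set \<Rightarrow> 'a set \<Rightarrow> nat" where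
  "rank_set E S = card S - num_components E S"

definition rank_edges :: "'a set set \<Rightarrow> 'a set set \<Rightarrow> nat" where
  "rank_edges E F = rank_set E (\<Union>F)"

definition vertex_cover :: "'a set \<Rightarrow> 'a set set \<Rightarrow> 'a set \<Rightarrow> bool" where
  "vertex_cover V E C \<longleftrightarrow> C \<subseteq> V \<and> (\<forall>e\<in>E. e \<inter> C \<noteq> {})"

definition min_vertex_cover :: "'a set \<Rightarrow> 'a set set \<Rightarrow> 'a set \<Rightarrow> bool" where
  "min_vertex_cover V E C \<longleftrightarrow> vertex_cover V E C \<and>
     (\<forall>C'. vertex_cover V E C' \<longrightarrow> card C \<le> card C')"

definition independent_set :: "'a set \<Rightarrow> 'a set set \<Rightarrow> 'a set \<Rightarrow> bool" where
  "independent_set V E S \<longleftrightarrow> S \<subseteq> V \<and> (\<forall>e\<in>E. \<not> e \<subseteq> S)"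

definition edges_between :: "'a set set \<Rightarrow> 'a set \<Rightarrow> 'a set \<Rightarrow> 'a set set" where
  "edges_between E S1 S2 = {e \<in> E. \<exists>u v. e = {u, v} \<and> u \<in> S1 \<and> v \<in> S2}"

definition annotated_contraction_vc ::
  "'a set \<Rightarrow> 'a set set \<Rightarrow> int \<Rightarrow> int \<Rightarrow> 'a set \<Rightarrow> 'a set \<Rightarrow> 'a set \<Rightarrow> bool" where
  "annotated_contraction_vc V E k d X XL XR \<longleftrightarrow>
     (\<exists>Xs Ys. Xs \<subseteq> X \<and> Ys \<subseteq> V - X \<and>
        vertex_cover V E ((X - Xs) \<union> Ys) \<and>
        int (rank_set E ((X - Xs) \<union> Ys)) \<ge> k \<and>
        int (card Ys) - int (card Xs) \<le> k - d \<and>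
        XL \<inter> Xs = {} \<and> XR \<subseteq> Xs)"

definition constrained_maxcut ::
  "'a set \<Rightarrow> 'a set set \<Rightarrow> int \<Rightarrow> int \<Rightarrow> 'a set \<Rightarrow> 'a set \<Rightarrow> 'a set \<Rightarrow> bool" where
  "constrained_maxcut V E k d X XL XR \<longleftrightarrow>
     (\<exists>VL VR. VL \<union> VR = V \<and> VL \<inter> VR = {} \<and>
        edges_between E (VL \<inter> (V - X)) (VR \<inter> X) = {} \<and>
        int (rank_edges E (edges_between E (VL \<inter> X) (VR \<inter> (V - X)))) \<ge> k \<and>
        int (card (VR \<inter> (V - X))) - int (card (VR \<inter> X)) \<le> k - d \<and>
        XL \<subseteq> VL \<and> XR \<subseteq> VR)"

end

theory Submission
  imports Defs
begin

text \<open>Since X is both a vertex cover and an independent set, G is bipartite with sides X and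
  Y = V - X, and every edge joins X to Y. A partition \<langle>VL, VR\<rangle> of V corresponds to the choice
  Xs = VR \<inter> X, Ys = VR \<inter> Y, and the cover (X - Xs) \<union> Ys is then (VL \<inter> X) \<union> (VR \<inter> Y).
  This set covers every edge exactly when no edge runs from VL \<inter> Y to VR \<inter> X, and its
  non-isolated vertices are precisely the endpoints of E(VL \<inter> X, VR \<inter> Y). Isolated
  vertices do not change the rank, so the two rank conditions agree, and the remaining
  conditions translate literally.\<close>

definition non_isolated :: "'a set set \<Rightarrow> 'a set \<Rightarrow> 'a set" where
  "non_isolated E S = {v \<in> S. \<exists>u\<in>S. {u, v} \<in> E}"

lemma non_isolated_subset: "non_isolated E S \<subseteq> S"
  unfolding non_isolated_def by auto

lemma adj_in_non_isolated: "adj_in E (non_isolated E S) = adj_in E S"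
  unfolding adj_in_def non_isolated_def by (auto, metis insert_commute)

lemma adj_in_imp_non_isolated:
  "(u, v) \<in> adj_in E S \<Longrightarrow> u \<in> non_isolated E S \<and> v \<in> non_isolated E S"
  unfolding adj_in_def non_isolated_def by (auto, metis insert_commute)

lemma conn_in_class_non_isolated:
  assumes "x \<in> non_isolated E S"
  shows "conn_in E S `` {x} = conn_in E (non_isolated E S) `` {x}"
proof -
  have "(x, y) \<in> (adj_in E S)\<^sup>* \<Longrightarrow> y = x \<or> y \<in> non_isolated E S" for y
    by (induction rule: rtrancl_induct) (auto dest: adj_in_imp_non_isolated)
  then show ?thesis
    using assms non_isolated_subset[of E S] unfolding conn_in_def adj_in_non_isolated by auto
qed

lemma conn_in_class_isolated:
  assumes "x \<in> S - non_isolated E S"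
  shows "conn_in E S `` {x} = {x}"
proof -
  have "(x, y) \<in> (adj_in E S)\<^sup>* \<Longrightarrow> y = x" for y
    using assms by (auto elim: converse_rtranclE dest: adj_in_imp_non_isolated)
  then show ?thesis
    using assms unfolding conn_in_def by auto
qed

lemma quotient_conn_in_split:
  "S // conn_in E S =
     non_isolated E S // conn_in E (non_isolated E S) \<union> (\<lambda>x. {x}) ` (S - non_isolated E S)"
proof -
  let ?N = "non_isolated E S"
  have "S // conn_in E S = (\<lambda>x. conn_in E S `` {x}) ` ?N \<union> (\<lambda>x. conn_in E S `` {x}) ` (S - ?N)"
    using non_isolated_subset[of E S] unfolding quotient_def by blast
  also have "(\<lambda>x. conn_in E S `` {x}) ` ?N = (\<lambda>x. conn_in E ?N `` {x}) ` ?N"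
    by (rule image_cong[OF refl conn_in_class_non_isolated])
  also have "(\<lambda>x. conn_in E S `` {x}) ` (S - ?N) = (\<lambda>x. {x}) ` (S - ?N)"
    by (rule image_cong[OF refl conn_in_class_isolated])
  also have "(\<lambda>x. conn_in E ?N `` {x}) ` ?N = ?N // conn_in E ?N"
    unfolding quotient_def by blast
  finally show ?thesis .
qed

text \<open>Isolated vertices are singleton components, so each adds one to both |S| and the
  number of components.\<close>
lemma rank_set_non_isolated:
  assumes "finite S"
  shows "rank_set E (non_isolated E S) = rank_set E S"
proof -
  let ?N = "non_isolated E S"
  have fin: "finite ?N"
    using non_isolated_subset assms by (rule finite_subset)
  then have fin_quotient: "finite (?N // conn_in E ?N)"
    unfolding quotient_def by simp
  have "?N // conn_in E ?N \<inter> (\<lambda>x. {x}) ` (S - ?N) = {}"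
    unfolding quotient_def conn_in_def by auto
  then have "num_components E S = num_components E ?N + card (S - ?N)"
    using assms fin_quotient unfolding num_components_def
    by (subst quotient_conn_in_split) (simp add: card_Un_disjoint card_image)
  moreover have "card S = card ?N + card (S - ?N)"
    using assms fin non_isolated_subset by (metis card_Diff_subset card_mono le_add_diff_inverse)
  ultimately show ?thesis
    unfolding rank_set_def by simp
qed

lemma vertex_cover_subset: "vertex_cover V E C \<Longrightarrow> C \<subseteq> V"
  unfolding vertex_cover_def by blast

lemma edge_crosses_cover_independent:
  assumes "graph V E" "vertex_cover V E X" "independent_set V E X" "e \<in> E"
  obtains x y where "e = {x, y}" "x \<in> X" "y \<in> V - X"
proof -
  obtain u v where e: "e = {u, v}" "u \<noteq> v" and "e \<subseteq> V"
    using assms(1,4) unfolding graph_def by (metis card_2_iff)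
  moreover have "e \<inter> X \<noteq> {}" "\<not> e \<subseteq> X"
    using assms(2-4) unfolding vertex_cover_def independent_set_def by auto
  ultimately show thesis
    using that insert_commute by blast
qed

context
  fixes V X VL VR :: "'a set" and E :: "'a set set"
  assumes graph: "graph V E"
    and cover: "vertex_cover V E X"
    and independent: "independent_set V E X"
    and partition: "VL \<union> VR = V" "VL \<inter> VR = {}"
begin

private lemma edge_crosses:
  assumes "e \<in> E"
  obtains x y where "e = {x, y}" "x \<in> X" "y \<in> V - X"
  using edge_crosses_cover_independent[OF graph cover independent assms] by blast

lemma vertex_cover_cut_iff:
  "vertex_cover V E ((VL \<inter> X) \<union> (VR \<inter> (V - X))) \<longleftrightarrow>
     edges_between E (VL \<inter> (V - X)) (VR \<inter> X) = {}"
proof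
  assume "vertex_cover V E ((VL \<inter> X) \<union> (VR \<inter> (V - X)))"
  then show "edges_between E (VL \<inter> (V - X)) (VR \<inter> X) = {}"
    using partition unfolding vertex_cover_def edges_between_def by fastforce
next
  assume no_back_edge: "edges_between E (VL \<inter> (V - X)) (VR \<inter> X) = {}"
  have "e \<inter> ((VL \<inter> X) \<union> (VR \<inter> (V - X))) \<noteq> {}" if "e \<in> E" for e
  proof -
    obtain x y where e: "e = {x, y}" "x \<in> X" "y \<in> V - X"
      using edge_crosses \<open>e \<in> E\<close> by blast
    show ?thesis
    proof (rule ccontr)
      assume "\<not> ?thesis"
      then have "y \<in> VL \<inter> (V - X)" "x \<in> VR \<inter> X" "e = {y, x}"
        using e partition vertex_cover_subset[OF cover] by auto
      then show False
        using no_back_edge \<open>e \<in> E\<close> unfolding edges_between_def by blast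
    qed
  qed
  moreover have "VL \<inter> X \<union> VR \<inter> (V - X) \<subseteq> V"
    using partition by blast
  ultimately show "vertex_cover V E ((VL \<inter> X) \<union> (VR \<inter> (V - X)))"
    unfolding vertex_cover_def by blast
qed

lemma Union_edges_between_cut:
  "\<Union> (edges_between E (VL \<inter> X) (VR \<inter> (V - X))) = non_isolated E ((VL \<inter> X) \<union> (VR \<inter> (V - X)))"
  (is "?lhs = non_isolated E ?C")
proof
  show "?lhs \<subseteq> non_isolated E ?C"
  proof
    fix w assume "w \<in> ?lhs"
    then obtain a b where ab: "{a, b} \<in> E" "a \<in> ?C" "b \<in> ?C" "w \<in> {a, b}"
      unfolding edges_between_def by blast
    moreover have "{b, a} \<in> E"
      using ab(1) by (simp add: insert_commute)
    ultimately show "w \<in> non_isolated E ?C"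
      unfolding non_isolated_def by blast
  qed
next
  show "non_isolated E ?C \<subseteq> ?lhs"
  proof
    fix v assume "v \<in> non_isolated E ?C"
    then obtain u where "u \<in> ?C" "v \<in> ?C" and uv: "{u, v} \<in> E"
      unfolding non_isolated_def by blast
    moreover obtain x y where xy: "{u, v} = {x, y}" "x \<in> X" "y \<in> V - X"
      using edge_crosses[OF uv] by blast
    ultimately have "x \<in> VL \<inter> X" "y \<in> VR \<inter> (V - X)"
      by (auto simp: doubleton_eq_iff)
    then show "v \<in> ?lhs"
      using uv xy unfolding edges_between_def by blast
  qed
qed

lemma rank_set_cut_eq:
  "rank_set E ((VL \<inter> X) \<union> (VR \<inter> (V - X))) =
     rank_edges E (edges_between E (VL \<inter> X) (VR \<inter> (V - X)))"
proof -
  have "finite V"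
    using graph unfolding graph_def by blast
  moreover have "(VL \<inter> X) \<union> (VR \<inter> (V - X)) \<subseteq> V"
    using partition by blast
  ultimately have "finite ((VL \<inter> X) \<union> (VR \<inter> (V - X)))"
    by (rule rev_finite_subset)
  then show ?thesis
    unfolding rank_edges_def Union_edges_between_cut by (rule rank_set_non_isolated[symmetric])
qed

end

lemma annotated_contraction_vc_imp_constrained_maxcut:
  assumes graph: "graph V E" and cover: "vertex_cover V E X" and independent: "independent_set V E X"
    and "XL \<subseteq> X" and "annotated_contraction_vc V E k d X XL XR"
  shows "constrained_maxcut V E k d X XL XR"
proof -
  obtain Xs Ys where Xs: "Xs \<subseteq> X" and Ys: "Ys \<subseteq> V - X"
    and sol: "vertex_cover V E ((X - Xs) \<union> Ys)" "int (rank_set E ((X - Xs) \<union> Ys)) \<ge> k"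
      "int (card Ys) - int (card Xs) \<le> k - d" "XL \<inter> Xs = {}" "XR \<subseteq> Xs"
    using assms(5) unfolding annotated_contraction_vc_def by blast
  define VR where "VR = Xs \<union> Ys"
  define VL where "VL = V - VR"
  have partition: "VL \<union> VR = V" "VL \<inter> VR = {}"
    and sides: "(X - Xs) \<union> Ys = (VL \<inter> X) \<union> (VR \<inter> (V - X))" "VR \<inter> X = Xs" "VR \<inter> (V - X) = Ys"
    and "XL \<subseteq> VL" "XR \<subseteq> VR"
    using Xs Ys sol(4,5) \<open>XL \<subseteq> X\<close> vertex_cover_subset[OF cover]
    unfolding VL_def VR_def by blast+
  moreover have "edges_between E (VL \<inter> (V - X)) (VR \<inter> X) = {}"
    using sol(1) vertex_cover_cut_iff[OF graph cover independent partition] sides(1) by simp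
  moreover have "int (rank_edges E (edges_between E (VL \<inter> X) (VR \<inter> (V - X)))) \<ge> k"
    using sol(2) rank_set_cut_eq[OF graph cover independent partition] sides(1) by simp
  ultimately show ?thesis
    unfolding constrained_maxcut_def using sol(3) sides(2,3)
    by (intro exI[of _ VL] exI[of _ VR]) auto
qed

lemma constrained_maxcut_imp_annotated_contraction_vc:
  assumes graph: "graph V E" and cover: "vertex_cover V E X" and independent: "independent_set V E X"
    and "XR \<subseteq> X" and "constrained_maxcut V E k d X XL XR"
  shows "annotated_contraction_vc V E k d X XL XR"
proof -
  obtain VL VR where partition: "VL \<union> VR = V" "VL \<inter> VR = {}"
    and sol: "edges_between E (VL \<inter> (V - X)) (VR \<inter> X) = {}"
      "int (rank_edges E (edges_between E (VL \<inter> X) (VR \<inter> (V - X)))) \<ge> k"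
      "int (card (VR \<inter> (V - X))) - int (card (VR \<inter> X)) \<le> k - d" "XL \<subseteq> VL" "XR \<subseteq> VR"
    using assms(5) unfolding constrained_maxcut_def by blast
  have side: "(X - VR \<inter> X) \<union> VR \<inter> (V - X) = (VL \<inter> X) \<union> (VR \<inter> (V - X))"
    using partition vertex_cover_subset[OF cover] by blast
  have "vertex_cover V E ((X - VR \<inter> X) \<union> VR \<inter> (V - X))"
    using sol(1) vertex_cover_cut_iff[OF graph cover independent partition] side by simp
  moreover have "int (rank_set E ((X - VR \<inter> X) \<union> VR \<inter> (V - X))) \<ge> k"
    using sol(2) rank_set_cut_eq[OF graph cover independent partition] side by simp
  moreover have "XL \<inter> (VR \<inter> X) = {}" "XR \<subseteq> VR \<inter> X"
    using partition(2) sol(4,5) \<open>XR \<subseteq> X\<close> by blast+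
  ultimately show ?thesis
    unfolding annotated_contraction_vc_def using sol(3)
    by (intro exI[of _ "VR \<inter> X"] exI[of _ "VR \<inter> (V - X)"]) auto
qed

theorem lemma15:
  fixes V :: "'a set" and E :: "'a set set" and k d :: int and X XL XR :: "'a set"
  assumes "graph V E"
    and "min_vertex_cover V E X"
    and "independent_set V E X"
    and "XL \<subseteq> X" and "XR \<subseteq> X" and "XL \<inter> XR = {}"
  shows "annotated_contraction_vc V E k d X XL XR \<longleftrightarrow> constrained_maxcut V E k d X XL XR"
proof -
  have "vertex_cover V E X"
    using assms(2) unfolding min_vertex_cover_def by blast
  then show ?thesis
    using annotated_contraction_vc_imp_constrained_maxcut[OF assms(1) _ assms(3,4)]
      constrained_maxcut_imp_annotated_contraction_vc[OF assms(1) _ assms(3,5)] by blast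
qed

end
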